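(* Let $\pi\colon \mathsf{States}\to\mathbb{R}_{\ge 0}$ be a potential function. For every program $C$ of the heap-manipulating probabilistic guarded command language and every $X\in\mathbb{A}_\pi$, $$\mathsf{aert}_\pi[\![C]\!](X) \;=\; \mathsf{ert}[\![C]\!](X+\pi)\;-\;\pi .$$
   Context: States and programs. Fix a finite set $\mathrm{Vars}$ of variables; values are $\mathbb{N}$, locations are $\mathbb{N}_{>0}$. A stack is $s\colon \mathrm{Vars}\to\mathbb{N}$; a heap is a partial map $h$ from a finite set $\mathrm{dom}(h)\subseteq\mathbb{N}_{>0}$ to $\mathbb{N}$. $h_1\perp h_2$ means disjoint domains; then $h_1\star h_2$ is their union; $h_\emptyset$ is the empty heap. $\mathsf{States}$ is the set of pairs $(s,h)$. $s(e)$ is the value of a (heap-independent) arithmetic expression $e$ under $s$, $s\models\varphi$ means the Boolean expression $\varphi$ holds under $s$, $s[x\mapsto v]$ is the updated stack, $h[\ell\mapsto v]$ (for $\ell\in\mathrm{dom}(h)$) the updated heap. Programs are generated by $C ::= \mathtt{tick}(e) \mid x:=e \mid x:=\mathtt{alloc}(e) \mid \langle e\rangle:=e' \mid x:=\langle e\rangle \mid \mathtt{free}(e) \mid \{C\}[p]\{C\} \mid \mathtt{if}(\varphi)\{C\}\mathtt{else}\{C\} \mid C;C \mid \mathtt{while}(\varphi)\{C\}$, where $p$ is an expression with $s(p)\in[0,1]\cap\mathbb{Q}$ for all $s$. The statements other than tick, probabilistic choice, conditional, sequencing and loops are called atomic. Runtimes. $\mathbb{T}$ is the set of functions $\mathsf{States}\to[0,\infty]$,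 ordered pointwise by $\preceq$; arithmetic is pointwise with $0\cdot\infty=0$. $[\varphi]$ is the $0/1$-valued Iverson bracket of a Boolean expression. Truncated subtraction: $a\dot- b=\max(a-b,0)$, $\infty\dot- b=\infty$ for finite $b$, $a\dot-\infty=0$. Separating sum: $(f\oplus g)(s,h)=\min\{f(s,h_1)+g(s,h_2)\mid h=h_1\star h_2\}$. Separating monus: $(f \mathbin{-\!\!\ominus} g)(s,h)=\sup\{g(s,h\star h')\dot- f(s,h')\mid h'\perp h\}$. Quantifiers: $(\inf y\colon f)(s,h)=\inf_{v\in\mathbb{N}} f(s[y\mapsto v],h)$ and $(\sup y\colon f)(s,h)=\sup_{v\in\mathbb{N}}f(s[y\mapsto v],h)$. Substitution: $f[x/e](s,h)=f(s[x\mapsto s(e)],h)$. Atomic runtimes: $\mathsf{tm}(e)(s,h)=s(e)$ if $h=h_\emptyset$, else $\infty$; $[e\mapsto e'](s,h)=0$ if $\mathrm{dom}(h)=\{s(e)\}$ and $h(s(e))=s(e')$, else $\infty$; $[e\mapsto -](s,h)=0$ if $\mathrm{dom}(h)=\{s(e)\}$, else $\infty$; $\bigoplus_{i=1}^{e} f_i$ is evaluated at $(s,h)$ as the separating sum over $i=1,\dots,s(e)$ (the empty one being $[\mathsf{emp}]$, which is $0$ if $h=h_\emptyset$ and $\infty$ otherwise). Expected runtime transformer $\mathsf{ert}[\![C]\!]\colon\mathbb{T}\to\mathbb{T}$, by induction on $C$ (with $v$ a fresh variable): $\mathsf{ert}[\![\mathtt{tick}(e)]\!](f)=\mathsf{tm}(e)\oplus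 f$; $\mathsf{ert}[\![x:=e]\!](f)=f[x/e]$; $\mathsf{ert}[\![x:=\mathtt{alloc}(e)]\!](f)=\sup v\colon \big(\bigoplus_{i=1}^{e}[v+i-1\mapsto 0]\big)\mathbin{-\!\!\ominus} f[x/v]$; $\mathsf{ert}[\![\langle e\rangle:=e']\!](f)=[e\mapsto-]\oplus([e\mapsto e']\mathbin{-\!\!\ominus} f)$; $\mathsf{ert}[\![x:=\langle e\rangle]\!](f)=\inf v\colon [e\mapsto v]\oplus([e\mapsto v]\mathbin{-\!\!\ominus} f[x/v])$; $\mathsf{ert}[\![\mathtt{free}(e)]\!](f)=[e\mapsto-]\oplus f$; $\mathsf{ert}[\![C_1;C_2]\!](f)=\mathsf{ert}[\![C_1]\!](\mathsf{ert}[\![C_2]\!](f))$; $\mathsf{ert}[\![\mathtt{if}(\varphi)\{C_1\}\mathtt{else}\{C_2\}]\!](f)=[\varphi]\cdot\mathsf{ert}[\![C_1]\!](f)+[\neg\varphi]\cdot\mathsf{ert}[\![C_2]\!](f)$; $\mathsf{ert}[\![\{C_1\}[p]\{C_2\}]\!](f)=p\cdot\mathsf{ert}[\![C_1]\!](f)+(1-p)\cdot\mathsf{ert}[\![C_2]\!](f)$; $\mathsf{ert}[\![\mathtt{while}(\varphi)\{C\}]\!](f)=\mathrm{lfp}\, g.\ [\neg\varphi]\cdot f+[\varphi]\cdot\mathsf{ert}[\![C]\!](g)$ (least fixed point in $(\mathbb{T},\preceq)$). Amortized runtimes. A potential function is $\pi\colon\mathsf{States}\to\mathbb{R}_{\ge0}$.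 $\mathbb{A}_\pi=\{X\colon\mathsf{States}\to\mathbb{R}\cup\{\infty\}\mid -\pi\le X \text{ pointwise}\}$, ordered pointwise by $\preceq$ (a complete lattice with least element $-\pi$). The transformer $\mathsf{aert}_\pi[\![C]\!]\colon\mathbb{A}_\pi\to\mathbb{A}_\pi$ is defined by: $\mathsf{aert}_\pi[\![\mathtt{tick}(e)]\!](X)=e+X$; for atomic $C$ other than tick, $\mathsf{aert}_\pi[\![C]\!](X)=\mathsf{ert}[\![C]\!](X+\pi)-\pi$; $\mathsf{aert}_\pi[\![C_1;C_2]\!](X)=\mathsf{aert}_\pi[\![C_1]\!](\mathsf{aert}_\pi[\![C_2]\!](X))$; conditional: $[\varphi]\cdot\mathsf{aert}_\pi[\![C_1]\!](X)+[\neg\varphi]\cdot\mathsf{aert}_\pi[\![C_2]\!](X)$; probabilistic choice: $p\cdot\mathsf{aert}_\pi[\![C_1]\!](X)+(1-p)\cdot\mathsf{aert}_\pi[\![C_2]\!](X)$; $\mathsf{aert}_\pi[\![\mathtt{while}(\varphi)\{C'\}]\!](X)=\mathrm{lfp}\,Y.\ [\neg\varphi]\cdot X+[\varphi]\cdot\mathsf{aert}_\pi[\![C']\!](Y)$ (least fixed point in $(\mathbb{A}_\pi,\preceq)$). *)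

theory Defs
  imports Complex_Main "HOL-Library.Extended_Nonnegative_Real"
begin

type_synonym 'v stack = "'v \<Rightarrow> nat"

typedef heap = "{h :: nat \<rightharpoonup> nat. finite (dom h) \<and> 0 \<notin> dom h}"
  by (rule exI[of _ Map.empty]) simp

setup_lifting type_definition_heap

lift_definition hdom :: "heap \<Rightarrow> nat set" is dom .
lift_definition hlookup :: "heap \<Rightarrow> nat \<Rightarrow> nat option" is "\<lambda>h l. h l" .
lift_definition hemp :: heap is Map.empty by simp

definition hdisj :: "heap \<Rightarrow> heap \<Rightarrow> bool" where
  "hdisj h1 h2 \<longleftrightarrow> hdom h1 \<inter> hdom h2 = {}"

lift_definition hunion :: "heap \<Rightarrow> heap \<Rightarrow> heap" is "\<lambda>h1 h2. h1 ++ h2" by auto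

type_synonym 'v state = "'v stack \<times> heap"
type_synonym 'v rt = "'v state \<Rightarrow> ennreal"
type_synonym 'v art = "'v state \<Rightarrow> ereal"

type_synonym 'v aexp = "'v stack \<Rightarrow> nat"
type_synonym 'v bexp = "'v stack \<Rightarrow> bool"

definition iv :: "bool \<Rightarrow> 'a::{zero,one}" where "iv b = (if b then 1 else 0)"

definition tsub :: "ennreal \<Rightarrow> ennreal \<Rightarrow> ennreal" where
  "tsub a b = (if b = top then 0 else a - b)"

definition sepsum :: "'v rt \<Rightarrow> 'v rt \<Rightarrow> 'v rt" where
  "sepsum f g = (\<lambda>(s, h). Inf {f (s, h1) + g (s, h2) | h1 h2. hdisj h1 h2 \<and> h = hunion h1 h2})"

definition sepmonus :: "'v rt \<Rightarrow> 'v rt \<Rightarrow> 'v rt" where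
  "sepmonus f g = (\<lambda>(s, h). Sup {tsub (g (s, hunion h h')) (f (s, h')) | h'. hdisj h h'})"

definition subst :: "('v state \<Rightarrow> 'a) \<Rightarrow> 'v \<Rightarrow> 'v aexp \<Rightarrow> ('v state \<Rightarrow> 'a)" where
  "subst f x e = (\<lambda>(s, h). f (s(x := e s), h))"

definition tm :: "'v aexp \<Rightarrow> 'v rt" where
  "tm e = (\<lambda>(s, h). if h = hemp then of_nat (e s) else top)"

definition pt :: "'v aexp \<Rightarrow> 'v aexp \<Rightarrow> 'v rt" where
  "pt e e' = (\<lambda>(s, h). if hdom h = {e s} \<and> hlookup h (e s) = Some (e' s) then 0 else top)"

definition ptany :: "'v aexp \<Rightarrow> 'v rt" where
  "ptany e = (\<lambda>(s, h). if hdom h = {e s} then 0 else top)"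

definition emp :: "'v rt" where
  "emp = (\<lambda>(s, h). if h = hemp then 0 else top)"

primrec bigsep_n :: "(nat \<Rightarrow> 'v rt) \<Rightarrow> nat \<Rightarrow> 'v rt" where
  "bigsep_n f 0 = emp"
| "bigsep_n f (Suc n) = sepsum (bigsep_n f n) (f (Suc n))"

definition bigsep :: "(nat \<Rightarrow> 'v rt) \<Rightarrow> 'v aexp \<Rightarrow> 'v rt" where
  "bigsep f e = (\<lambda>(s, h). bigsep_n f (e s) (s, h))"

datatype 'v prog =
    Tick "'v aexp"
  | Assign 'v "'v aexp"
  | Alloc 'v "'v aexp"
  | Store "'v aexp" "'v aexp"
  | Load 'v "'v aexp"
  | Free "'v aexp"
  | PChoice "'v prog" "'v stack \<Rightarrow> real" "'v prog"
  | If "'v bexp" "'v prog" "'v prog"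
  | Seq "'v prog" "'v prog"
  | While "'v bexp" "'v prog"

primrec wf_prog :: "'v prog \<Rightarrow> bool" where
  "wf_prog (Tick e) = True"
| "wf_prog (Assign x e) = True"
| "wf_prog (Alloc x e) = True"
| "wf_prog (Store e e') = True"
| "wf_prog (Load x e) = True"
| "wf_prog (Free e) = True"
| "wf_prog (PChoice C1 p C2) = ((\<forall>s. p s \<in> \<rat> \<and> 0 \<le> p s \<and> p s \<le> 1) \<and> wf_prog C1 \<and> wf_prog C2)"
| "wf_prog (If b C1 C2) = (wf_prog C1 \<and> wf_prog C2)"
| "wf_prog (Seq C1 C2) = (wf_prog C1 \<and> wf_prog C2)"
| "wf_prog (While b C) = wf_prog C"

text \<open>The fresh variable v of the quantified rules is rendered by quantifying
  directly over its value n.\<close>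
primrec ert :: "'v prog \<Rightarrow> 'v rt \<Rightarrow> 'v rt" where
  "ert (Tick e) f = sepsum (tm e) f"
| "ert (Assign x e) f = subst f x e"
| "ert (Alloc x e) f = (\<lambda>\<sigma>. SUP n. sepmonus (bigsep (\<lambda>i. pt (\<lambda>_. n + i - 1) (\<lambda>_. 0)) e)
                                             (subst f x (\<lambda>_. n)) \<sigma>)"
| "ert (Store e e') f = sepsum (ptany e) (sepmonus (pt e e') f)"
| "ert (Load x e) f = (\<lambda>\<sigma>. INF n. sepsum (pt e (\<lambda>_. n))
                                      (sepmonus (pt e (\<lambda>_. n)) (subst f x (\<lambda>_. n))) \<sigma>)"
| "ert (Free e) f = sepsum (ptany e) f"
| "ert (PChoice C1 p C2) f = (\<lambda>\<sigma>. ennreal (p (fst \<sigma>)) * ert C1 f \<sigma>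
                                   + ennreal (1 - p (fst \<sigma>)) * ert C2 f \<sigma>)"
| "ert (If b C1 C2) f = (\<lambda>\<sigma>. iv (b (fst \<sigma>)) * ert C1 f \<sigma> + iv (\<not> b (fst \<sigma>)) * ert C2 f \<sigma>)"
| "ert (Seq C1 C2) f = ert C1 (ert C2 f)"
| "ert (While b C) f = lfp (\<lambda>g \<sigma>. iv (\<not> b (fst \<sigma>)) * f \<sigma> + iv (b (fst \<sigma>)) * ert C g \<sigma>)"

definition Apot :: "('v state \<Rightarrow> real) \<Rightarrow> 'v art set" where
  "Apot \<pi> = {X. \<forall>\<sigma>. - ereal (\<pi> \<sigma>) \<le> X \<sigma>}"

definition lfp_on :: "'a::complete_lattice set \<Rightarrow> ('a \<Rightarrow> 'a) \<Rightarrow> 'a" where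
  "lfp_on A F = Inf {u \<in> A. F u \<le> u}"

text \<open>X + pi as a runtime (nonnegative on A_pi), and f - pi as an amortized runtime.\<close>
definition plus_pot :: "('v state \<Rightarrow> real) \<Rightarrow> 'v art \<Rightarrow> 'v rt" where
  "plus_pot \<pi> X = (\<lambda>\<sigma>. e2ennreal (X \<sigma> + ereal (\<pi> \<sigma>)))"

definition minus_pot :: "('v state \<Rightarrow> real) \<Rightarrow> 'v rt \<Rightarrow> 'v art" where
  "minus_pot \<pi> f = (\<lambda>\<sigma>. enn2ereal (f \<sigma>) - ereal (\<pi> \<sigma>))"

primrec aert :: "('v state \<Rightarrow> real) \<Rightarrow> 'v prog \<Rightarrow> 'v art \<Rightarrow> 'v art" where
  "aert \<pi> (Tick e) X = (\<lambda>\<sigma>. ereal (real (e (fst \<sigma>))) + X \<sigma>)"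
| "aert \<pi> (Assign x e) X = minus_pot \<pi> (ert (Assign x e) (plus_pot \<pi> X))"
| "aert \<pi> (Alloc x e) X = minus_pot \<pi> (ert (Alloc x e) (plus_pot \<pi> X))"
| "aert \<pi> (Store e e') X = minus_pot \<pi> (ert (Store e e') (plus_pot \<pi> X))"
| "aert \<pi> (Load x e) X = minus_pot \<pi> (ert (Load x e) (plus_pot \<pi> X))"
| "aert \<pi> (Free e) X = minus_pot \<pi> (ert (Free e) (plus_pot \<pi> X))"
| "aert \<pi> (PChoice C1 p C2) X = (\<lambda>\<sigma>. ereal (p (fst \<sigma>)) * aert \<pi> C1 X \<sigma>
                                   + ereal (1 - p (fst \<sigma>)) * aert \<pi> C2 X \<sigma>)"
| "aert \<pi> (If b C1 C2) X = (\<lambda>\<sigma>. iv (b (fst \<sigma>)) * aert \<pi> C1 X \<sigma> + iv (\<not> b (fst \<sigma>)) * aert \<pi> C2 X \<sigma>)"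
| "aert \<pi> (Seq C1 C2) X = aert \<pi> C1 (aert \<pi> C2 X)"
| "aert \<pi> (While b C) X = lfp_on (Apot \<pi>)
     (\<lambda>Y \<sigma>. iv (\<not> b (fst \<sigma>)) * X \<sigma> + iv (b (fst \<sigma>)) * aert \<pi> C Y \<sigma>)"

end

theory Submission
  imports Defs
begin

text \<open>The maps \<open>X \<mapsto> X + \<pi>\<close> (\<^const>\<open>plus_pot\<close>) and \<open>f \<mapsto> f - \<pi>\<close>
  (\<^const>\<open>minus_pot\<close>) form a Galois insertion of runtimes into amortized runtimes, and
  the image of \<^const>\<open>minus_pot\<close> is exactly \<open>\<A>\<^sub>\<pi>\<close>. Every rule of \<open>aert\<^sub>\<pi>\<close> is
  the conjugate of the corresponding rule of \<open>ert\<close> under this pair, so the theorem follows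
  by induction on the program. For loops, the right adjoint \<^const>\<open>minus_pot\<close> preserves
  infima and therefore carries the least fixed point of the \<open>ert\<close> loop functional to
  the least fixed point in \<open>\<A>\<^sub>\<pi>\<close> of the \<open>aert\<^sub>\<pi>\<close> one.\<close>

lemma right_adjoint_Inf_image:
  fixes p :: "'a::complete_lattice \<Rightarrow> 'b::complete_lattice"
  assumes adj: "\<And>x y. p x \<le> y \<longleftrightarrow> x \<le> m y"
  shows "Inf (m ` S) = m (Inf S)"
proof (rule antisym)
  have "p (Inf (m ` S)) \<le> Inf S"
    by (rule Inf_greatest) (simp add: adj Inf_lower)
  then show "Inf (m ` S) \<le> m (Inf S)" by (simp add: adj)
next
  have "p (m (Inf S)) \<le> Inf S" by (simp add: adj)
  then have "p (m (Inf S)) \<le> y" if "y \<in> S" for y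
    using that Inf_lower order_trans by blast
  then show "m (Inf S) \<le> Inf (m ` S)" by (auto intro: Inf_greatest simp: adj[symmetric])
qed

lemma lfp_on_range_right_adjoint:
  fixes p :: "'a::complete_lattice \<Rightarrow> 'b::complete_lattice"
  assumes adj: "\<And>x y. p x \<le> y \<longleftrightarrow> x \<le> m y"
    and p_m: "\<And>y. p (m y) = y"
    and F_m: "\<And>y. F (m y) = m (G y)"
  shows "lfp_on (range m) F = m (lfp G)"
proof -
  have "m (G y) \<le> m y \<longleftrightarrow> G y \<le> y" for y
    using adj[of "m (G y)" y] by (simp add: p_m)
  then have "{x \<in> range m. F x \<le> x} = m ` {y. G y \<le> y}"
    by (auto simp: F_m)
  then show ?thesis
    by (simp add: lfp_on_def lfp_def right_adjoint_Inf_image[OF adj])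
qed

lemma le_enn2ereal_e2ennreal: "x \<le> enn2ereal (e2ennreal x)"
  by (cases "0 \<le> x") (auto simp: enn2ereal_e2ennreal e2ennreal_neg intro: order_trans[OF _ enn2ereal_nonneg])

lemma le_minus_pot_plus_pot: "X \<le> minus_pot \<pi> (plus_pot \<pi> X)"
proof (rule le_funI)
  fix \<sigma>
  have "X \<sigma> + ereal (\<pi> \<sigma>) \<le> enn2ereal (plus_pot \<pi> X \<sigma>)"
    unfolding plus_pot_def by (rule le_enn2ereal_e2ennreal)
  then show "X \<sigma> \<le> minus_pot \<pi> (plus_pot \<pi> X) \<sigma>"
    unfolding minus_pot_def by (cases "X \<sigma>"; cases "enn2ereal (plus_pot \<pi> X \<sigma>)") auto
qed

lemma plus_pot_minus_pot [simp]: "plus_pot \<pi> (minus_pot \<pi> f) = f"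
proof
  fix \<sigma>
  have "enn2ereal (f \<sigma>) - ereal (\<pi> \<sigma>) + ereal (\<pi> \<sigma>) = enn2ereal (f \<sigma>)"
    by (cases "enn2ereal (f \<sigma>)") auto
  then show "plus_pot \<pi> (minus_pot \<pi> f) \<sigma> = f \<sigma>"
    by (simp add: minus_pot_def plus_pot_def)
qed

lemma mono_plus_pot: "mono (plus_pot \<pi>)"
  unfolding plus_pot_def by (auto intro!: monoI le_funI e2ennreal_mono add_right_mono dest: le_funD)

lemma mono_minus_pot: "mono (minus_pot \<pi>)"
  unfolding minus_pot_def
  by (auto intro!: monoI le_funI ereal_minus_mono simp: less_eq_ennreal.rep_eq dest: le_funD)

lemma plus_pot_le_iff_le_minus_pot: "plus_pot \<pi> X \<le> f \<longleftrightarrow> X \<le> minus_pot \<pi> f"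
proof
  assume "plus_pot \<pi> X \<le> f"
  then show "X \<le> minus_pot \<pi> f"
    using le_minus_pot_plus_pot mono_minus_pot order_trans by (metis monoD)
next
  assume "X \<le> minus_pot \<pi> f"
  then show "plus_pot \<pi> X \<le> f"
    using mono_plus_pot by (metis monoD plus_pot_minus_pot)
qed

lemma Apot_eq_range_minus_pot: "Apot \<pi> = range (minus_pot \<pi>)"
proof (intro set_eqI iffI)
  fix X assume X: "X \<in> Apot \<pi>"
  have "minus_pot \<pi> (plus_pot \<pi> X) \<sigma> = X \<sigma>" for \<sigma>
  proof -
    have "- ereal (\<pi> \<sigma>) \<le> X \<sigma>" using X unfolding Apot_def by blast
    then have "0 \<le> X \<sigma> + ereal (\<pi> \<sigma>)" by (cases "X \<sigma>") auto
    then show ?thesis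
      by (cases "X \<sigma>") (simp_all add: minus_pot_def plus_pot_def enn2ereal_e2ennreal)
  qed
  then show "X \<in> range (minus_pot \<pi>)" by (metis ext rangeI)
next
  fix X assume "X \<in> range (minus_pot \<pi>)"
  then obtain f where X: "X = minus_pot \<pi> f" by blast
  have "- ereal (\<pi> \<sigma>) \<le> enn2ereal (f \<sigma>) - ereal (\<pi> \<sigma>)" for \<sigma>
    using enn2ereal_nonneg[of "f \<sigma>"] by (cases "enn2ereal (f \<sigma>)") auto
  then show "X \<in> Apot \<pi>" by (simp add: X Apot_def minus_pot_def)
qed

lemma sepsum_tm_apply: "sepsum (tm e) f (s, h) = of_nat (e s) + f (s, h)"
proof -
  let ?S = "{tm e (s, h1) + f (s, h2) | h1 h2. hdisj h1 h2 \<and> h = hunion h1 h2}"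
  have "hdisj hemp h" and hemp_unit: "\<And>h'. hunion hemp h' = h'"
    unfolding hdisj_def by (transfer, simp)+
  then have "of_nat (e s) + f (s, h) \<in> ?S"
    by (intro CollectI exI[of _ hemp] exI[of _ h]) (simp add: tm_def)
  moreover have "of_nat (e s) + f (s, h) \<le> y" if "y \<in> ?S" for y
    using that by (auto simp: tm_def hemp_unit)
  ultimately have "Inf ?S = of_nat (e s) + f (s, h)"
    by (blast intro: antisym Inf_lower Inf_greatest)
  then show ?thesis by (simp add: sepsum_def)
qed

lemma convex_comb_enn2ereal_minus:
  assumes "0 \<le> p" "p \<le> 1"
  shows "ereal p * (enn2ereal a - ereal r) + ereal (1 - p) * (enn2ereal b - ereal r)
       = enn2ereal (ennreal p * a + ennreal (1 - p) * b) - ereal r"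
  using assms
  by (cases a; cases b) (auto simp: plus_ennreal.rep_eq times_ennreal.rep_eq ennreal_mult_top
      algebra_simps ennreal_top_mult zero_ennreal.rep_eq)

lemma aert_minus_pot:
  assumes "wf_prog C"
  shows "aert \<pi> C (minus_pot \<pi> f) = minus_pot \<pi> (ert C f)"
  using assms
proof (induction C arbitrary: f)
  case (Tick e)
  have "ereal (real n) + (enn2ereal a - ereal r) = enn2ereal (of_nat n + a) - ereal r"
    for n a r by (cases "enn2ereal a") (auto simp: plus_ennreal.rep_eq)
  then show ?case
    by (auto simp: fun_eq_iff minus_pot_def sepsum_tm_apply)
next
  case (PChoice C1 p C2)
  then show ?case
    by (auto simp: fun_eq_iff minus_pot_def convex_comb_enn2ereal_minus)
next
  case (If b C1 C2)
  then show ?case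
    by (simp add: fun_eq_iff minus_pot_def iv_def)
next
  case (While b C)
  let ?G = "\<lambda>g \<sigma>. iv (\<not> b (fst \<sigma>)) * f \<sigma> + iv (b (fst \<sigma>)) * ert C g \<sigma>"
  have "lfp_on (range (minus_pot \<pi>))
          (\<lambda>Y \<sigma>. iv (\<not> b (fst \<sigma>)) * minus_pot \<pi> f \<sigma> + iv (b (fst \<sigma>)) * aert \<pi> C Y \<sigma>)
        = minus_pot \<pi> (lfp ?G)"
  proof (rule lfp_on_range_right_adjoint[where p = "plus_pot \<pi>"])
    fix g
    show "(\<lambda>\<sigma>. iv (\<not> b (fst \<sigma>)) * minus_pot \<pi> f \<sigma> + iv (b (fst \<sigma>)) * aert \<pi> C (minus_pot \<pi> g) \<sigma>)
        = minus_pot \<pi> (?G g)"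
      using While by (simp add: fun_eq_iff minus_pot_def iv_def)
  qed (simp_all add: plus_pot_le_iff_le_minus_pot)
  then show ?case by (simp add: Apot_eq_range_minus_pot)
qed simp_all

theorem mainTheorem1:
  fixes \<pi> :: "('v::finite) state \<Rightarrow> real" and C :: "'v prog" and X :: "'v art"
  assumes "\<forall>\<sigma>. 0 \<le> \<pi> \<sigma>"
    and "wf_prog C"
    and "X \<in> Apot \<pi>"
  shows "aert \<pi> C X = (\<lambda>\<sigma>. enn2ereal (ert C (\<lambda>\<sigma>'. e2ennreal (X \<sigma>' + ereal (\<pi> \<sigma>'))) \<sigma>) - ereal (\<pi> \<sigma>))"
proof -
  obtain f where X: "X = minus_pot \<pi> f"
    using assms(3) by (auto simp: Apot_eq_range_minus_pot)
  have "aert \<pi> C X = minus_pot \<pi> (ert C (plus_pot \<pi> X))"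
    using aert_minus_pot[OF assms(2)] by (simp add: X)
  then show ?thesis by (simp add: minus_pot_def plus_pot_def)
qed

end
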